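(* In the setting below, let $Z$ be a chain and let $P\in\mathcal{R}\cup\mathcal{B}$. If two vertices $v,v'$ both lie on $Z$ and on $P$, and $v$ appears before $v'$ on $Z$, then $v$ appears before $v'$ on $P$ (with $P$ oriented from $S_1$ to $T_1$ if red, from $S_2$ to $T_2$ if blue).
   Context: Setting: $G$ is a graph; $S_1,T_1,S_2,T_2\subseteq V(G)$ are pairwise disjoint sets of $k$ vertices each, all of degree $1$ in $G$, with $(S_1,T_1)$ and $(S_2,T_2)$ each routable in $G$ (connected by $k$ node-disjoint paths). $H$ is an $(S_1,T_1,S_2,T_2)$-minimal minor of $G$: a minor of $G$ containing the vertices of $S_1\cup T_1\cup S_2\cup T_2$ as vertices (each with singleton branch set), in which both pairs are routable, and such that deleting or contracting any edge of $H$ destroys one of these properties. $\mathcal{R}$ (red paths) is a set of $k$ node-disjoint paths routing $(S_1,T_1)$ in $H$, and $\mathcal{B}$ (blue paths) is a set of $k$ node-disjoint paths routing $(S_2,T_2)$ in $H$. $\tilde H$ is the directed graph on $V(H)$ whose edges are the edges of red paths directed from $S_1$ toward $T_1$ (red edges) and the edges of blue paths directed from $S_2$ toward $T_2$ (blue edges). A chain is a directed (not necessarily simple) walk $e_1,\dots,e_r$ in $\tilde H$ whose edges alternate in color. *)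

theory Defs
  imports Main
begin

definition sgraph :: "'a set \<Rightarrow> 'a set set \<Rightarrow> bool" where
  "sgraph V E \<longleftrightarrow> finite V \<and> (\<forall>e\<in>E. \<exists>x y. x \<noteq> y \<and> e = {x, y} \<and> x \<in> V \<and> y \<in> V)"

definition is_path :: "'a set \<Rightarrow> 'a set set \<Rightarrow> 'a list \<Rightarrow> bool" where
  "is_path V E p \<longleftrightarrow> p \<noteq> [] \<and> distinct p \<and> set p \<subseteq> V \<and>
     (\<forall>i. Suc i < length p \<longrightarrow> {p ! i, p ! Suc i} \<in> E)"

definition degree :: "'a set set \<Rightarrow> 'a \<Rightarrow> nat" where
  "degree E v = card {e \<in> E. v \<in> e}"

definition routes :: "'a set \<Rightarrow> 'a set set \<Rightarrow> 'a set \<Rightarrow> 'a set \<Rightarrow> nat \<Rightarrow> 'a list set \<Rightarrow> bool" where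
  "routes V E S T k Ps \<longleftrightarrow> finite Ps \<and> card Ps = k \<and>
     (\<forall>p\<in>Ps. is_path V E p \<and> hd p \<in> S \<and> last p \<in> T) \<and>
     (\<forall>p\<in>Ps. \<forall>q\<in>Ps. p \<noteq> q \<longrightarrow> set p \<inter> set q = {})"

definition routable :: "'a set \<Rightarrow> 'a set set \<Rightarrow> 'a set \<Rightarrow> 'a set \<Rightarrow> nat \<Rightarrow> bool" where
  "routable V E S T k \<longleftrightarrow> (\<exists>Ps. routes V E S T k Ps)"

definition connected_set :: "'a set set \<Rightarrow> 'a set \<Rightarrow> bool" where
  "connected_set E X \<longleftrightarrow> (\<forall>a\<in>X. \<forall>b\<in>X. \<exists>p. is_path X E p \<and> hd p = a \<and> last p = b)"

definition minor_model ::
  "'a set \<Rightarrow> 'a set set \<Rightarrow> 'a set \<Rightarrow> 'a set set \<Rightarrow> ('a \<Rightarrow> 'a set) \<Rightarrow> bool" where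
  "minor_model VG EG VH EH \<phi> \<longleftrightarrow>
     (\<forall>x\<in>VH. \<phi> x \<noteq> {} \<and> \<phi> x \<subseteq> VG \<and> connected_set EG (\<phi> x)) \<and>
     (\<forall>x\<in>VH. \<forall>y\<in>VH. x \<noteq> y \<longrightarrow> \<phi> x \<inter> \<phi> y = {}) \<and>
     (\<forall>x y. {x, y} \<in> EH \<longrightarrow> (\<exists>a\<in>\<phi> x. \<exists>b\<in>\<phi> y. {a, b} \<in> EG))"

definition terminal_minor ::
  "'a set \<Rightarrow> 'a set set \<Rightarrow> 'a set \<Rightarrow> 'a set \<Rightarrow> 'a set \<Rightarrow> 'a set \<Rightarrow> nat \<Rightarrow>
   'a set \<Rightarrow> 'a set set \<Rightarrow> ('a \<Rightarrow> 'a set) \<Rightarrow> bool" where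
  "terminal_minor VG EG S1 T1 S2 T2 k VH EH \<phi> \<longleftrightarrow>
     sgraph VH EH \<and> minor_model VG EG VH EH \<phi> \<and>
     (\<forall>t \<in> S1 \<union> T1 \<union> S2 \<union> T2. t \<in> VH \<and> \<phi> t = {t}) \<and>
     routable VH EH S1 T1 k \<and> routable VH EH S2 T2 k"

text \<open>Contracting the edge {u,v}: v is merged into u (the new vertex is named u and
  its branch set is the union of the two branch sets).\<close>
definition contract_V :: "'a set \<Rightarrow> 'a \<Rightarrow> 'a \<Rightarrow> 'a set" where
  "contract_V VH u v = VH - {v}"

definition contract_E :: "'a set set \<Rightarrow> 'a \<Rightarrow> 'a \<Rightarrow> 'a set set" where
  "contract_E EH u v = {(\<lambda>x. if x = v then u else x) ` e | e. e \<in> EH \<and> e \<noteq> {u, v}}"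

definition contract_model :: "('a \<Rightarrow> 'a set) \<Rightarrow> 'a \<Rightarrow> 'a \<Rightarrow> ('a \<Rightarrow> 'a set)" where
  "contract_model \<phi> u v = \<phi>(u := \<phi> u \<union> \<phi> v)"

definition minimal_terminal_minor ::
  "'a set \<Rightarrow> 'a set set \<Rightarrow> 'a set \<Rightarrow> 'a set \<Rightarrow> 'a set \<Rightarrow> 'a set \<Rightarrow> nat \<Rightarrow>
   'a set \<Rightarrow> 'a set set \<Rightarrow> ('a \<Rightarrow> 'a set) \<Rightarrow> bool" where
  "minimal_terminal_minor VG EG S1 T1 S2 T2 k VH EH \<phi> \<longleftrightarrow>
     terminal_minor VG EG S1 T1 S2 T2 k VH EH \<phi> \<and>
     (\<forall>e\<in>EH. \<not> terminal_minor VG EG S1 T1 S2 T2 k VH (EH - {e}) \<phi>) \<and>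
     (\<forall>u v. {u, v} \<in> EH \<longrightarrow>
        \<not> terminal_minor VG EG S1 T1 S2 T2 k (contract_V VH u v) (contract_E EH u v)
             (contract_model \<phi> u v))"

definition arcs :: "'a list set \<Rightarrow> ('a \<times> 'a) set" where
  "arcs Ps = {(x, y). \<exists>p\<in>Ps. \<exists>i. Suc i < length p \<and> p ! i = x \<and> p ! Suc i = y}"

text \<open>Coloured edges of H-tilde: (True,x,y) red, (False,x,y) blue.\<close>
definition tildeH :: "'a list set \<Rightarrow> 'a list set \<Rightarrow> (bool \<times> 'a \<times> 'a) set" where
  "tildeH R B = {(True, x, y) | x y. (x, y) \<in> arcs R} \<union> {(False, x, y) | x y. (x, y) \<in> arcs B}"

definition is_chain :: "'a list set \<Rightarrow> 'a list set \<Rightarrow> (bool \<times> 'a \<times> 'a) list \<Rightarrow> bool" where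
  "is_chain R B Z \<longleftrightarrow> Z \<noteq> [] \<and> set Z \<subseteq> tildeH R B \<and>
     (\<forall>i. Suc i < length Z \<longrightarrow>
        snd (snd (Z ! i)) = fst (snd (Z ! Suc i)) \<and> fst (Z ! Suc i) \<noteq> fst (Z ! i))"

definition walk_verts :: "(bool \<times> 'a \<times> 'a) list \<Rightarrow> 'a list" where
  "walk_verts Z = fst (snd (hd Z)) # map (\<lambda>e. snd (snd e)) Z"

end

theory Submission
  imports Defs
begin

text \<open>In the minimal minor no edge carries both a red and a blue arc, since it could be
  contracted, and an edge whose deletion keeps one pair routable carries an arc of the other
  colour, since otherwise it could be deleted. Hence no closed walk follows red paths forwards
  and blue arcs in between: in a shortest one the red paths are pairwise different, and
  splicing each of them onto the next along the blue arcs reroutes the red pair without one of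
  its own edges. If \<open>v'\<close> preceded \<open>v\<close> on a red path, the chain from \<open>v\<close> to \<open>v'\<close> closed up by
  the red run from \<open>v'\<close> back to \<open>v\<close> would be such a walk, because alternation puts a red arc
  before every blue one. Blue paths are handled symmetrically.\<close>

lemma is_path_iff_successively:
  "is_path V E p \<longleftrightarrow> p \<noteq> [] \<and> distinct p \<and> set p \<subseteq> V \<and> successively (\<lambda>a b. {a, b} \<in> E) p"
  unfolding is_path_def successively_conv_nth by blast

lemma is_path_edge: "is_path V E p \<Longrightarrow> Suc i < length p \<Longrightarrow> {p ! i, p ! Suc i} \<in> E"
  unfolding is_path_def by blast

lemma is_path_append:
  assumes "is_path V E xs" "is_path V' E ys" "set xs \<inter> set ys = {}" "{last xs, hd ys} \<in> E"
  shows "is_path (V \<union> V') E (xs @ ys)"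
  using assms unfolding is_path_iff_successively by (auto simp: successively_append_iff)

lemma is_path_rev: "is_path V E p \<Longrightarrow> is_path V E (rev p)"
  unfolding is_path_iff_successively by (auto simp: insert_commute)

lemma is_path_mono: "is_path V E p \<Longrightarrow> V \<subseteq> V' \<Longrightarrow> is_path V' E p"
  unfolding is_path_def by auto

lemma is_path_take: "is_path V E p \<Longrightarrow> 0 < t \<Longrightarrow> is_path V E (take t p)"
  unfolding is_path_def by (auto dest: in_set_takeD)

lemma is_path_drop: "is_path V E p \<Longrightarrow> t < length p \<Longrightarrow> is_path V E (drop t p)"
  unfolding is_path_def by (auto dest: in_set_dropD)

lemma is_path_Diff_edge:
  assumes "is_path V E p" "\<And>i. Suc i < length p \<Longrightarrow> {p ! i, p ! Suc i} \<noteq> e"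
  shows "is_path V (E - {e}) p"
  using assms unfolding is_path_def by blast

lemma is_path_Diff_edge_not_subset:
  assumes "is_path V E p" "\<not> e \<subseteq> set p"
  shows "is_path V (E - {e}) p"
  using assms by (intro is_path_Diff_edge) (auto dest: Suc_lessD)

lemma is_path_interior_neighbours:
  assumes p: "is_path V E p" "z \<in> set p" "hd p \<noteq> z" "last p \<noteq> z"
  obtains c d where "c \<noteq> d" "{z, c} \<in> E" "{z, d} \<in> E"
proof -
  obtain r where r: "r < length p" "p ! r = z" using p(2) by (auto simp: in_set_conv_nth)
  have ne: "p \<noteq> []" and dist: "distinct p" using p(1) unfolding is_path_def by blast+
  have "0 < r" using r p(3) ne by (metis gr0I hd_conv_nth)
  moreover have "Suc r < length p" using r p(4) ne by (metis Suc_lessI diff_Suc_1 last_conv_nth)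
  ultimately have "p ! (r - 1) \<noteq> p ! Suc r" "{p ! (r - 1), z} \<in> E" "{z, p ! Suc r} \<in> E"
    using dist is_path_edge[OF p(1), of "r - 1"] is_path_edge[OF p(1), of r] r
    by (auto simp: nth_eq_iff_index_eq)
  then show thesis by (intro that[of "p ! (r - 1)" "p ! Suc r"]) (auto simp: insert_commute)
qed

lemma nth_in_set_drop: "m \<le> j \<Longrightarrow> j < length xs \<Longrightarrow> xs ! j \<in> set (drop m xs)"
  using nth_mem[of "j - m" "drop m xs"] by simp

lemma nth_in_set_take: "j < m \<Longrightarrow> j < length xs \<Longrightarrow> xs ! j \<in> set (take m xs)"
  using nth_mem[of j "take m xs"] by simp

lemma sgraph_finite_edges:
  assumes "sgraph V E" shows "finite E"
proof (rule finite_subset)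
  show "E \<subseteq> Pow V"
  proof
    fix e assume "e \<in> E"
    then obtain x y where "e = {x, y}" "x \<in> V" "y \<in> V" using assms unfolding sgraph_def by meson
    then show "e \<in> Pow V" by simp
  qed
  show "finite (Pow V)" using assms unfolding sgraph_def by simp
qed

lemma sgraph_edge_vertices:
  assumes "sgraph V E" "{x, y} \<in> E" shows "x \<in> V" "y \<in> V" "x \<noteq> y"
proof -
  obtain a b where "a \<noteq> b" "{x, y} = {a, b}" "a \<in> V" "b \<in> V"
    using assms unfolding sgraph_def by meson
  then show "x \<in> V" "y \<in> V" "x \<noteq> y" by (auto simp: doubleton_eq_iff)
qed

lemma routes_paths:
  assumes "routes V E S T k Ps" "p \<in> Ps"
  shows "is_path V E p" "hd p \<in> S" "last p \<in> T"
  using assms unfolding routes_def by blast+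

lemma routes_disjoint:
  "routes V E S T k Ps \<Longrightarrow> p \<in> Ps \<Longrightarrow> q \<in> Ps \<Longrightarrow> p \<noteq> q \<Longrightarrow> set p \<inter> set q = {}"
  unfolding routes_def by blast

section \<open>Contracting an edge\<close>

lemma connected_set_path:
  "connected_set E X \<Longrightarrow> a \<in> X \<Longrightarrow> b \<in> X \<Longrightarrow> \<exists>p. is_path X E p \<and> hd p = a \<and> last p = b"
  unfolding connected_set_def by simp

lemma connected_set_Un:
  assumes A: "connected_set E A" and B: "connected_set E B" and AB: "A \<inter> B = {}"
    and edge: "\<alpha> \<in> A" "\<beta> \<in> B" "{\<alpha>, \<beta>} \<in> E"
  shows "connected_set E (A \<union> B)"
proof -
  have across: "\<exists>p. is_path (A \<union> B) E p \<and> hd p = a \<and> last p = b" if "a \<in> A" "b \<in> B" for a b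
  proof -
    obtain p where p: "is_path A E p" "hd p = a" "last p = \<alpha>"
      using connected_set_path[OF A \<open>a \<in> A\<close> edge(1)] by blast
    obtain q where q: "is_path B E q" "hd q = \<beta>" "last q = b"
      using connected_set_path[OF B edge(2) \<open>b \<in> B\<close>] by blast
    have "set p \<subseteq> A" "set q \<subseteq> B" "p \<noteq> []" "q \<noteq> []"
      using p(1) q(1) unfolding is_path_def by blast+
    then show ?thesis
      using is_path_append[OF p(1) q(1)] AB edge(3) p(2,3) q(2,3)
      by (intro exI[of _ "p @ q"]) auto
  qed
  have within: "\<exists>p. is_path (A \<union> B) E p \<and> hd p = a \<and> last p = b"
    if "connected_set E C" "C \<subseteq> A \<union> B" "a \<in> C" "b \<in> C" for C a b
    using connected_set_path[OF that(1,3,4)] is_path_mono[OF _ that(2)] by blast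
  have reversed: "\<exists>p. is_path (A \<union> B) E p \<and> hd p = a \<and> last p = b"
    if "is_path (A \<union> B) E p" "hd p = b" "last p = a" for p a b
    using that is_path_rev[OF that(1)] by (intro exI[of _ "rev p"]) (simp add: hd_rev last_rev)
  show ?thesis
    unfolding connected_set_def
  proof (intro ballI)
    fix a b assume "a \<in> A \<union> B" "b \<in> A \<union> B"
    then consider "a \<in> A" "b \<in> A" | "a \<in> B" "b \<in> B" | "a \<in> A" "b \<in> B" | "a \<in> B" "b \<in> A"
      by blast
    then show "\<exists>p. is_path (A \<union> B) E p \<and> hd p = a \<and> last p = b"
    proof cases
      case 1
      then show ?thesis using within[OF A] by blast
    next
      case 2
      then show ?thesis using within[OF B] by blast
    next
      case 3
      then show ?thesis by (rule across)
    next
      case 4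
      then obtain p where "is_path (A \<union> B) E p" "hd p = b" "last p = a" using across by blast
      then show ?thesis by (rule reversed)
    qed
  qed
qed

lemma contract_E_edge:
  assumes "{a, b} \<in> E" "{a, b} \<noteq> {x, y}"
  shows "{if a = y then x else a, if b = y then x else b} \<in> contract_E E x y"
  unfolding contract_E_def using assms by (intro CollectI exI[of _ "{a, b}"]) auto

lemma contract_E_edge_avoiding:
  "{a, b} \<in> E \<Longrightarrow> a \<noteq> y \<Longrightarrow> b \<noteq> y \<Longrightarrow> {a, b} \<in> contract_E E x y"
  using contract_E_edge[of a b E x y] by (auto simp: doubleton_eq_iff)

lemma is_path_contract_through:
  assumes p: "is_path V E (q1 @ a # b # q2)" and ab: "{a, b} = {x, y}" and xy: "x \<noteq> y"
  shows "is_path (V - {y}) (contract_E E x y) (q1 @ x # q2)"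
proof -
  have dist: "distinct (q1 @ a # b # q2)" and V: "set (q1 @ a # b # q2) \<subseteq> V"
    and succ: "successively (\<lambda>u w. {u, w} \<in> E) (q1 @ a # b # q2)"
    using p unfolding is_path_iff_successively by blast+
  have "a \<notin> set q1 \<and> b \<notin> set q1 \<and> a \<notin> set q2 \<and> b \<notin> set q2" using dist by auto
  moreover have "x \<in> {a, b}" "y \<in> {a, b}" using ab by auto
  ultimately have xy_out: "x \<notin> set q1" "y \<notin> set q1" "x \<notin> set q2" "y \<notin> set q2" by auto
  have succ_parts: "successively (\<lambda>u w. {u, w} \<in> E) q1" "successively (\<lambda>u w. {u, w} \<in> E) q2"
    using succ by (auto simp: successively_append_iff successively_Cons)
  have keep: "successively (\<lambda>u w. {u, w} \<in> contract_E E x y) q" if "y \<notin> set q"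
    and "successively (\<lambda>u w. {u, w} \<in> E) q" for q
  proof (rule successively_mono[OF that(2)])
    fix u w assume "u \<in> set q" "w \<in> set q" "{u, w} \<in> E"
    then show "{u, w} \<in> contract_E E x y" using that(1) by (intro contract_E_edge_avoiding) auto
  qed
  have "successively (\<lambda>u w. {u, w} \<in> contract_E E x y) q1"
    "successively (\<lambda>u w. {u, w} \<in> contract_E E x y) q2"
    using keep succ_parts xy_out by blast+
  moreover have "{last q1, x} \<in> contract_E E x y" if "q1 \<noteq> []"
  proof -
    have "{last q1, a} \<in> E" using succ that by (auto simp: successively_append_iff)
    moreover have "last q1 \<notin> {x, y}" using xy_out that last_in_set by fastforce
    ultimately show ?thesis using contract_E_edge[of "last q1" a E x y] ab by (auto simp: doubleton_eq_iff)
  qed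
  moreover have "{x, hd q2} \<in> contract_E E x y" if "q2 \<noteq> []"
  proof -
    have "{b, hd q2} \<in> E" using succ that by (cases q2) (auto simp: successively_append_iff)
    moreover have "hd q2 \<notin> {x, y}" using xy_out that hd_in_set by fastforce
    ultimately show ?thesis using contract_E_edge[of b "hd q2" E x y] ab by (auto simp: doubleton_eq_iff)
  qed
  ultimately have "successively (\<lambda>u w. {u, w} \<in> contract_E E x y) (q1 @ x # q2)"
    by (cases q2) (auto simp: successively_append_iff successively_Cons)
  moreover have "distinct (q1 @ x # q2)" using dist xy_out by auto
  moreover have "set (q1 @ x # q2) \<subseteq> V - {y}" using V xy_out xy \<open>x \<in> {a, b}\<close> by auto
  ultimately show ?thesis unfolding is_path_iff_successively by simp
qed

lemma is_path_contract:
  assumes p: "is_path V E q" and xy: "x \<noteq> y"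
    and through: "y \<notin> set q \<or> (\<exists>l. Suc l < length q \<and> {q ! l, q ! Suc l} = {x, y})"
  shows "is_path (V - {y}) (contract_E E x y) (filter (\<lambda>z. z \<noteq> y) q)"
  using through
proof
  assume y: "y \<notin> set q"
  then have "filter (\<lambda>z. z \<noteq> y) q = q" by (auto simp: filter_id_conv)
  moreover have "successively (\<lambda>u w. {u, w} \<in> E) q" using p unfolding is_path_iff_successively by blast
  then have "successively (\<lambda>u w. {u, w} \<in> contract_E E x y) q"
  proof (rule successively_mono)
    fix u w assume "u \<in> set q" "w \<in> set q" "{u, w} \<in> E"
    then show "{u, w} \<in> contract_E E x y" using y by (intro contract_E_edge_avoiding) auto
  qed
  ultimately show ?thesis using p y unfolding is_path_iff_successively by auto
next
  assume "\<exists>l. Suc l < length q \<and> {q ! l, q ! Suc l} = {x, y}"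
  then obtain l where l: "Suc l < length q" "{q ! l, q ! Suc l} = {x, y}" by blast
  define q1 q2 a b where "q1 = take l q" and "q2 = drop (Suc (Suc l)) q" and "a = q ! l"
    and "b = q ! Suc l"
  have q: "q = q1 @ a # b # q2"
    unfolding q1_def q2_def a_def b_def using l(1)
    by (metis Cons_nth_drop_Suc Suc_lessD append_take_drop_id)
  have ab: "{a, b} = {x, y}" using l(2) unfolding a_def b_def .
  have "distinct (q1 @ a # b # q2)" using p q unfolding is_path_def by blast
  moreover have "y \<in> {a, b}" using ab by simp
  ultimately have "y \<notin> set q1" "y \<notin> set q2" by auto
  then have "filter (\<lambda>z. z \<noteq> y) q1 = q1" "filter (\<lambda>z. z \<noteq> y) q2 = q2"
    by (auto simp: filter_id_conv)
  then have "filter (\<lambda>z. z \<noteq> y) q = q1 @ x # q2"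
    using ab xy unfolding q by (auto simp: doubleton_eq_iff)
  moreover have "is_path (V - {y}) (contract_E E x y) (q1 @ x # q2)"
    using is_path_contract_through[OF _ ab xy] p unfolding q .
  ultimately show ?thesis by simp
qed

lemma hd_filter_of_hd: "xs \<noteq> [] \<Longrightarrow> P (hd xs) \<Longrightarrow> hd (filter P xs) = hd xs"
  by (cases xs) auto

lemma last_filter_of_last: "xs \<noteq> [] \<Longrightarrow> P (last xs) \<Longrightarrow> last (filter P xs) = last xs"
  by (induct xs rule: rev_induct) auto

lemma routes_contract:
  assumes r: "routes V E S T k Ps" and xy: "x \<noteq> y" and y: "y \<notin> S" "y \<notin> T"
    and through: "\<forall>q\<in>Ps. y \<notin> set q \<or> (\<exists>l. Suc l < length q \<and> {q ! l, q ! Suc l} = {x, y})"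
  shows "routes (V - {y}) (contract_E E x y) S T k (filter (\<lambda>z. z \<noteq> y) ` Ps)"
proof -
  let ?F = "filter (\<lambda>z. z \<noteq> y)"
  have path: "is_path (V - {y}) (contract_E E x y) (?F q)" if "q \<in> Ps" for q
    using is_path_contract[OF routes_paths(1)[OF r that] xy] through that by blast
  have ends: "hd (?F q) = hd q" "last (?F q) = last q" if "q \<in> Ps" for q
  proof -
    have "q \<noteq> []" using routes_paths(1)[OF r that] unfolding is_path_def by blast
    moreover have "hd q \<noteq> y" "last q \<noteq> y" using routes_paths(2,3)[OF r that] y by blast+
    ultimately show "hd (?F q) = hd q" "last (?F q) = last q"
      by (simp_all add: hd_filter_of_hd last_filter_of_last)
  qed
  have disj: "set (?F p) \<inter> set (?F q) = {}" if "p \<in> Ps" "q \<in> Ps" "p \<noteq> q" for p q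
    using routes_disjoint[OF r that] by auto
  have inj: "inj_on ?F Ps"
  proof (rule inj_onI)
    fix p q assume pq: "p \<in> Ps" "q \<in> Ps" "?F p = ?F q"
    have "?F p \<noteq> []" using path[OF pq(1)] unfolding is_path_def by blast
    then show "p = q" using disj[OF pq(1,2)] pq(3) by (metis inf.idem set_empty)
  qed
  have "finite Ps" "card Ps = k" using r unfolding routes_def by blast+
  then have "finite (?F ` Ps)" "card (?F ` Ps) = k" using card_image[OF inj] by simp_all
  moreover have "\<forall>p\<in>?F ` Ps. is_path (V - {y}) (contract_E E x y) p \<and> hd p \<in> S \<and> last p \<in> T"
    using path ends routes_paths(2,3)[OF r] by auto
  moreover have "\<forall>p\<in>?F ` Ps. \<forall>q\<in>?F ` Ps. p \<noteq> q \<longrightarrow> set p \<inter> set q = {}"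
    using disj by blast
  ultimately show ?thesis unfolding routes_def by blast
qed

lemma sgraph_contract:
  assumes G: "sgraph V E" and x: "x \<in> V" and xy: "x \<noteq> y"
  shows "sgraph (V - {y}) (contract_E E x y)"
  unfolding sgraph_def
proof (intro conjI ballI)
  show "finite (V - {y})" using G unfolding sgraph_def by simp
next
  let ?f = "\<lambda>z. if z = y then x else z"
  fix e' assume "e' \<in> contract_E E x y"
  then obtain e where e: "e \<in> E" "e \<noteq> {x, y}" "e' = ?f ` e"
    unfolding contract_E_def by blast
  then obtain a b where "e = {a, b}" using G unfolding sgraph_def by blast
  then have ab: "{a, b} \<in> E" "{a, b} \<noteq> {x, y}" "e' = {?f a, ?f b}" using e by auto
  have "a \<in> V" "b \<in> V" "a \<noteq> b" using sgraph_edge_vertices[OF G ab(1)] by blast+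
  then have "?f a \<noteq> ?f b" "?f a \<in> V - {y}" "?f b \<in> V - {y}" using ab(2) x xy by (auto simp: doubleton_eq_iff)
  then show "\<exists>u w. u \<noteq> w \<and> e' = {u, w} \<and> u \<in> V - {y} \<and> w \<in> V - {y}" using ab(3) by blast
qed

lemma minor_model_contract:
  assumes m: "minor_model VG EG V E \<phi>" and G: "sgraph V E" and xy: "{x, y} \<in> E"
  shows "minor_model VG EG (V - {y}) (contract_E E x y) (contract_model \<phi> x y)"
proof -
  let ?\<psi> = "contract_model \<phi> x y" and ?f = "\<lambda>u. if u = y then x else u"
  have V: "x \<in> V" "y \<in> V" "x \<noteq> y" using sgraph_edge_vertices[OF G xy] by blast+
  have branch: "\<forall>z\<in>V. \<phi> z \<noteq> {} \<and> \<phi> z \<subseteq> VG \<and> connected_set EG (\<phi> z)"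
    and disj: "\<forall>z\<in>V. \<forall>w\<in>V. z \<noteq> w \<longrightarrow> \<phi> z \<inter> \<phi> w = {}"
    and edges: "\<forall>z w. {z, w} \<in> E \<longrightarrow> (\<exists>a\<in>\<phi> z. \<exists>b\<in>\<phi> w. {a, b} \<in> EG)"
    using m unfolding minor_model_def by blast+
  have \<psi>: "?\<psi> z = (if z = x then \<phi> x \<union> \<phi> y else \<phi> z)" for z
    unfolding contract_model_def by simp
  have "connected_set EG (\<phi> x \<union> \<phi> y)"
  proof -
    obtain a b where "a \<in> \<phi> x" "b \<in> \<phi> y" "{a, b} \<in> EG" using edges xy by blast
    then show ?thesis using branch disj V by (intro connected_set_Un) auto
  qed
  then have "\<forall>z\<in>V - {y}. ?\<psi> z \<noteq> {} \<and> ?\<psi> z \<subseteq> VG \<and> connected_set EG (?\<psi> z)"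
    using branch V(1,2) unfolding \<psi> by simp
  moreover have "\<forall>z\<in>V - {y}. \<forall>w\<in>V - {y}. z \<noteq> w \<longrightarrow> ?\<psi> z \<inter> ?\<psi> w = {}"
  proof (intro ballI impI)
    fix z w assume zw: "z \<in> V - {y}" "w \<in> V - {y}" "z \<noteq> w"
    then have "\<phi> z \<inter> \<phi> w = {}" "\<phi> z \<inter> \<phi> y = {}" "\<phi> y \<inter> \<phi> w = {}" using disj V by auto
    then show "?\<psi> z \<inter> ?\<psi> w = {}" using zw unfolding \<psi> by auto
  qed
  moreover have "\<exists>a\<in>?\<psi> z. \<exists>b\<in>?\<psi> w. {a, b} \<in> EG" if zw: "{z, w} \<in> contract_E E x y" for z w
  proof -
    obtain e where e: "e \<in> E" "{z, w} = ?f ` e" using zw unfolding contract_E_def by blast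
    obtain a b where ab: "e = {a, b}" using G e(1) unfolding sgraph_def by blast
    obtain \<alpha> \<beta> where \<alpha>\<beta>: "\<alpha> \<in> \<phi> a" "\<beta> \<in> \<phi> b" "{\<alpha>, \<beta>} \<in> EG" using edges e(1) ab by blast
    have sub: "\<phi> u \<subseteq> ?\<psi> (?f u)" for u unfolding \<psi> by auto
    have "{z, w} = {?f a, ?f b}" using e(2) ab by simp
    then consider "z = ?f a" "w = ?f b" | "z = ?f b" "w = ?f a" by (auto simp: doubleton_eq_iff)
    then show ?thesis
    proof cases
      case 1
      then show ?thesis using sub[of a] sub[of b] \<alpha>\<beta> by blast
    next
      case 2
      moreover have "{\<beta>, \<alpha>} \<in> EG" using \<alpha>\<beta>(3) by (simp add: insert_commute)
      ultimately show ?thesis using sub[of a] sub[of b] \<alpha>\<beta>(1,2) by blast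
    qed
  qed
  ultimately show ?thesis unfolding minor_model_def by blast
qed

lemma terminal_minor_contract:
  assumes tm: "terminal_minor VG EG S1 T1 S2 T2 k VH EH \<phi>" and xy: "{x, y} \<in> EH"
    and not_terminal: "x \<notin> S1 \<union> T1 \<union> S2 \<union> T2" "y \<notin> S1 \<union> T1 \<union> S2 \<union> T2"
    and R: "routes VH EH S1 T1 k R" and B: "routes VH EH S2 T2 k B"
    and through: "\<forall>q\<in>R \<union> B. y \<notin> set q \<or> (\<exists>l. Suc l < length q \<and> {q ! l, q ! Suc l} = {x, y})"
  shows "terminal_minor VG EG S1 T1 S2 T2 k (contract_V VH x y) (contract_E EH x y)
           (contract_model \<phi> x y)"
proof -
  have G: "sgraph VH EH" and m: "minor_model VG EG VH EH \<phi>"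
    and t: "\<forall>t \<in> S1 \<union> T1 \<union> S2 \<union> T2. t \<in> VH \<and> \<phi> t = {t}"
    using tm unfolding terminal_minor_def by blast+
  have V: "x \<in> VH" "x \<noteq> y" using sgraph_edge_vertices[OF G xy] by blast+
  have "\<forall>t \<in> S1 \<union> T1 \<union> S2 \<union> T2. t \<in> VH - {y} \<and> contract_model \<phi> x y t = {t}"
    using t not_terminal unfolding contract_model_def by auto
  moreover have "routable (VH - {y}) (contract_E EH x y) S1 T1 k"
    "routable (VH - {y}) (contract_E EH x y) S2 T2 k"
    unfolding routable_def using routes_contract[OF R V(2)] routes_contract[OF B V(2)]
      not_terminal through by blast+
  ultimately show ?thesis
    unfolding terminal_minor_def contract_V_def
    using sgraph_contract[OF G V] minor_model_contract[OF m G xy] by blast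
qed

text \<open>A terminal has degree 1 in \<open>G\<close> and a singleton branch set, so it has at most one
  neighbour in the minor.\<close>
lemma terminal_minor_terminal_neighbour_unique:
  assumes G: "sgraph VG EG" and tm: "terminal_minor VG EG S1 T1 S2 T2 k VH EH \<phi>"
    and deg1: "\<forall>t \<in> S1 \<union> T1 \<union> S2 \<union> T2. degree EG t = 1"
    and t: "t \<in> S1 \<union> T1 \<union> S2 \<union> T2" and edges: "{t, c} \<in> EH" "{t, d} \<in> EH"
  shows "c = d"
proof (rule ccontr)
  assume "c \<noteq> d"
  have GH: "sgraph VH EH" and m: "minor_model VG EG VH EH \<phi>" and \<phi>t: "\<phi> t = {t}"
    using tm t unfolding terminal_minor_def by blast+
  have disj: "\<forall>z\<in>VH. \<forall>w\<in>VH. z \<noteq> w \<longrightarrow> \<phi> z \<inter> \<phi> w = {}"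
    and realise: "\<forall>z w. {z, w} \<in> EH \<longrightarrow> (\<exists>a\<in>\<phi> z. \<exists>b\<in>\<phi> w. {a, b} \<in> EG)"
    using m unfolding minor_model_def by blast+
  obtain \<beta> where \<beta>: "\<beta> \<in> \<phi> c" "{t, \<beta>} \<in> EG" using realise[rule_format, OF edges(1)] unfolding \<phi>t by blast
  obtain \<gamma> where \<gamma>: "\<gamma> \<in> \<phi> d" "{t, \<gamma>} \<in> EG" using realise[rule_format, OF edges(2)] unfolding \<phi>t by blast
  have "\<beta> \<noteq> \<gamma>"
    using disj sgraph_edge_vertices(1)[OF GH edges(1)[unfolded insert_commute[of t]]]
      sgraph_edge_vertices(1)[OF GH edges(2)[unfolded insert_commute[of t]]] \<open>c \<noteq> d\<close> \<beta>(1) \<gamma>(1)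
    by blast
  moreover have "\<beta> \<noteq> t" using sgraph_edge_vertices(3)[OF G \<beta>(2)] by simp
  ultimately have "{t, \<beta>} \<noteq> {t, \<gamma>}" by (auto simp: doubleton_eq_iff)
  moreover have "{{t, \<beta>}, {t, \<gamma>}} \<subseteq> {e \<in> EG. t \<in> e}" using \<beta> \<gamma> by auto
  ultimately have "2 \<le> degree EG t"
    unfolding degree_def using card_mono[OF _ \<open>{{t, \<beta>}, {t, \<gamma>}} \<subseteq> _\<close>] sgraph_finite_edges[OF G]
    by simp
  then show False using deg1 t by auto
qed

section \<open>The two routings in a minimal minor\<close>

definition arc_edges :: "('a \<times> 'a) set \<Rightarrow> 'a set set" where
  "arc_edges A = (\<lambda>(x, y). {x, y}) ` A"

lemma arcsE:
  assumes "(x, y) \<in> arcs Ps"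
  obtains p i where "p \<in> Ps" "Suc i < length p" "p ! i = x" "p ! Suc i = y"
  using assms unfolding arcs_def by blast

lemma arcsI: "p \<in> Ps \<Longrightarrow> Suc i < length p \<Longrightarrow> (p ! i, p ! Suc i) \<in> arcs Ps"
  unfolding arcs_def by blast

lemma routes_arc_edges: "routes V E S T k Ps \<Longrightarrow> arc_edges (arcs Ps) \<subseteq> E"
  unfolding arc_edges_def by (auto elim!: arcsE dest: routes_paths(1) is_path_edge)

lemma routes_Diff_edge:
  assumes r: "routes V E S T k Ps" and e: "e \<notin> arc_edges (arcs Ps)"
  shows "routes V (E - {e}) S T k Ps"
proof -
  have "is_path V (E - {e}) p" if "p \<in> Ps" for p
    using routes_paths(1)[OF r that] e arcsI[OF that] unfolding arc_edges_def
    by (intro is_path_Diff_edge) force+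
  then show ?thesis using r unfolding routes_def by blast
qed

lemma minimal_terminal_minor_edge_needed:
  assumes H: "minimal_terminal_minor VG EG S1 T1 S2 T2 k VH EH \<phi>" and e: "e \<in> EH"
    and r1: "routable VH (EH - {e}) S1 T1 k" and r2: "routable VH (EH - {e}) S2 T2 k"
  shows False
proof -
  have tm: "terminal_minor VG EG S1 T1 S2 T2 k VH EH \<phi>"
    using H unfolding minimal_terminal_minor_def by blast
  then have "sgraph VH (EH - {e})" "minor_model VG EG VH (EH - {e}) \<phi>"
    unfolding terminal_minor_def sgraph_def minor_model_def by blast+
  then have "terminal_minor VG EG S1 T1 S2 T2 k VH (EH - {e}) \<phi>"
    using tm r1 r2 unfolding terminal_minor_def by blast
  then show False using H e unfolding minimal_terminal_minor_def by blast
qed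

lemma minimal_terminal_minor_deletable_edge:
  assumes H: "minimal_terminal_minor VG EG S1 T1 S2 T2 k VH EH \<phi>"
    and R: "routes VH EH S1 T1 k R" and B: "routes VH EH S2 T2 k B" and e: "e \<in> EH"
  shows "routable VH (EH - {e}) S1 T1 k \<Longrightarrow> e \<in> arc_edges (arcs B)"
    and "routable VH (EH - {e}) S2 T2 k \<Longrightarrow> e \<in> arc_edges (arcs R)"
  using minimal_terminal_minor_edge_needed[OF H e] routes_Diff_edge[OF R] routes_Diff_edge[OF B]
  unfolding routable_def by blast+

lemma routes_common_vertex_not_terminal:
  assumes G: "sgraph VG EG" and tm: "terminal_minor VG EG S1 T1 S2 T2 k VH EH \<phi>"
    and disj: "S1 \<inter> S2 = {}" "S1 \<inter> T2 = {}" "T1 \<inter> S2 = {}" "T1 \<inter> T2 = {}"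
    and deg1: "\<forall>t \<in> S1 \<union> T1 \<union> S2 \<union> T2. degree EG t = 1"
    and R: "routes VH EH S1 T1 k R" and B: "routes VH EH S2 T2 k B"
    and p: "p \<in> R" and q: "q \<in> B" and z: "z \<in> set p" "z \<in> set q"
  shows "z \<notin> S1 \<union> T1 \<union> S2 \<union> T2"
proof
  assume zT: "z \<in> S1 \<union> T1 \<union> S2 \<union> T2"
  obtain r where r: "is_path VH EH r" "z \<in> set r" "hd r \<noteq> z" "last r \<noteq> z"
  proof (cases "z \<in> S1 \<union> T1")
    case True
    then show thesis using that routes_paths[OF B q] z(2) disj by blast
  next
    case False
    then show thesis using that routes_paths[OF R p] z(1) zT by blast
  qed
  then obtain c d where "c \<noteq> d" "{z, c} \<in> EH" "{z, d} \<in> EH"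
    by (rule is_path_interior_neighbours)
  then show False using terminal_minor_terminal_neighbour_unique[OF G tm deg1 zT] by blast
qed

text \<open>An edge carried by both a red and a blue path could be contracted.\<close>
lemma minimal_terminal_minor_arc_edges_disjoint:
  assumes G: "sgraph VG EG"
    and disj: "S1 \<inter> S2 = {}" "S1 \<inter> T2 = {}" "T1 \<inter> S2 = {}" "T1 \<inter> T2 = {}"
    and deg1: "\<forall>t \<in> S1 \<union> T1 \<union> S2 \<union> T2. degree EG t = 1"
    and H: "minimal_terminal_minor VG EG S1 T1 S2 T2 k VH EH \<phi>"
    and R: "routes VH EH S1 T1 k R" and B: "routes VH EH S2 T2 k B"
  shows "arc_edges (arcs R) \<inter> arc_edges (arcs B) = {}"
proof (rule ccontr)
  assume "arc_edges (arcs R) \<inter> arc_edges (arcs B) \<noteq> {}"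
  then obtain x y x' y' where "(x, y) \<in> arcs R" "(x', y') \<in> arcs B" and xy: "{x', y'} = {x, y}"
    unfolding arc_edges_def by fastforce
  then obtain p l q m where p: "p \<in> R" "Suc l < length p" "p ! l = x" "p ! Suc l = y"
    and q: "q \<in> B" "Suc m < length q" "{q ! m, q ! Suc m} = {x, y}"
    using xy by (metis arcsE)
  have tm: "terminal_minor VG EG S1 T1 S2 T2 k VH EH \<phi>"
    using H unfolding minimal_terminal_minor_def by blast
  have edge: "{x, y} \<in> EH" using is_path_edge[OF routes_paths(1)[OF R p(1)] p(2)] p(3,4) by simp
  have on_p: "x \<in> set p" "y \<in> set p" using p by (auto dest: Suc_lessD)
  have on_q: "x \<in> set q" "y \<in> set q" using q by (auto dest: Suc_lessD simp: doubleton_eq_iff)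
  have not_terminal: "x \<notin> S1 \<union> T1 \<union> S2 \<union> T2" "y \<notin> S1 \<union> T1 \<union> S2 \<union> T2"
    using routes_common_vertex_not_terminal[OF G tm disj deg1 R B p(1) q(1)] on_p on_q by blast+
  have "y \<notin> set r \<or> (\<exists>l. Suc l < length r \<and> {r ! l, r ! Suc l} = {x, y})" if "r \<in> R \<union> B" for r
  proof (cases "r = p \<or> r = q")
    case True
    then show ?thesis using p q by auto
  next
    case False
    then have "set r \<inter> set p = {} \<or> set r \<inter> set q = {}"
      using that routes_disjoint[OF R p(1)] routes_disjoint[OF B q(1)] by blast
    then show ?thesis using on_p on_q by blast
  qed
  then have "terminal_minor VG EG S1 T1 S2 T2 k (contract_V VH x y) (contract_E EH x y)
      (contract_model \<phi> x y)"
    using terminal_minor_contract[OF tm edge not_terminal R B] by blast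
  then show False using H edge unfolding minimal_terminal_minor_def by blast
qed

section \<open>Red-blue cycles\<close>

lemma card_replace:
  assumes fin: "finite X" and inj: "inj_on f I" and sub: "f ` I \<subseteq> X"
    and inj': "inj_on g I" and disj: "g ` I \<inter> (X - f ` I) = {}"
  shows "card (g ` I \<union> (X - f ` I)) = card X"
proof -
  have fin_I: "finite I" using finite_imageD[OF finite_subset[OF sub fin] inj] .
  have "card (g ` I \<union> (X - f ` I)) = card (f ` I) + card (X - f ` I)"
    using fin fin_I disj by (simp add: card_Un_disjoint card_image[OF inj] card_image[OF inj'])
  also have "\<dots> = card X"
    using card_mono[OF fin sub] finite_subset[OF sub fin] sub by (simp add: card_Diff_subset)
  finally show ?thesis .
qed

lemma routes_replace:
  assumes r: "routes V E S T k Ps" and inj: "inj_on P I" and PI: "P ` I \<subseteq> Ps"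
    and Q: "\<And>i. i \<in> I \<Longrightarrow> is_path V E' (Q i) \<and> hd (Q i) \<in> S \<and> last (Q i) \<in> T"
    and QQ: "\<And>i j. i \<in> I \<Longrightarrow> j \<in> I \<Longrightarrow> i \<noteq> j \<Longrightarrow> set (Q i) \<inter> set (Q j) = {}"
    and Q_rest: "\<And>i q. i \<in> I \<Longrightarrow> q \<in> Ps - P ` I \<Longrightarrow> set (Q i) \<inter> set q = {}"
    and rest: "\<And>q. q \<in> Ps - P ` I \<Longrightarrow> is_path V E' q"
  shows "routes V E' S T k (Q ` I \<union> (Ps - P ` I))"
proof -
  have fin: "finite Ps" and card: "card Ps = k" using r unfolding routes_def by blast+
  have Q_ne: "Q i \<noteq> []" if "i \<in> I" for i using Q[OF that] unfolding is_path_def by blast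
  have fin_I: "finite I" using finite_imageD[OF finite_subset[OF PI fin] inj] .
  moreover have "inj_on Q I"
  proof (rule inj_onI, rule ccontr)
    fix i j assume ij: "i \<in> I" "j \<in> I" "Q i = Q j" "i \<noteq> j"
    then have "set (Q i) = {}" using QQ[OF ij(1,2,4)] by simp
    then show False using Q_ne[OF ij(1)] by simp
  qed
  moreover have "Q ` I \<inter> (Ps - P ` I) = {}"
  proof -
    have "Q i \<noteq> q" if "i \<in> I" "q \<in> Ps - P ` I" for i q
      using Q_rest[OF that] Q_ne[OF that(1)] by auto
    then show ?thesis by blast
  qed
  ultimately have "card (Q ` I \<union> (Ps - P ` I)) = k"
    using card_replace[OF fin inj PI] card by simp
  moreover have "\<forall>p\<in>Q ` I \<union> (Ps - P ` I). is_path V E' p \<and> hd p \<in> S \<and> last p \<in> T"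
    using Q rest routes_paths(2,3)[OF r] by blast
  moreover have "set p \<inter> set q = {}"
    if pq: "p \<in> Q ` I \<union> (Ps - P ` I)" "q \<in> Q ` I \<union> (Ps - P ` I)" "p \<noteq> q" for p q
  proof -
    from pq(1,2) consider i j where "i \<in> I" "j \<in> I" "p = Q i" "q = Q j"
      | i where "i \<in> I" "p = Q i" "q \<in> Ps - P ` I" | j where "j \<in> I" "p \<in> Ps - P ` I" "q = Q j"
      | "p \<in> Ps - P ` I" "q \<in> Ps - P ` I"
      by blast
    then show ?thesis
    proof cases
      case 1
      then show ?thesis using QQ pq(3) by blast
    next
      case 2
      then show ?thesis using Q_rest by blast
    next
      case 3
      then show ?thesis using Q_rest by blast
    next
      case 4
      then show ?thesis using routes_disjoint[OF r] pq(3) by blast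
    qed
  qed
  ultimately show ?thesis using fin fin_I unfolding routes_def by auto
qed

lemma arcs_trancl_path:
  assumes "p \<in> Ps" "l < l'" "l' < length p"
  shows "(p ! l, p ! l') \<in> (arcs Ps)\<^sup>+"
  using assms(2,3)
proof (induction l' rule: less_induct)
  case (less l')
  then obtain m where m: "l' = Suc m" by (cases l') auto
  have arc: "(p ! m, p ! l') \<in> arcs Ps" using arcsI[OF assms(1)] less.prems m by simp
  show ?case
  proof (cases "l = m")
    case True then show ?thesis using arc by auto
  next
    case False
    then have "(p ! l, p ! m) \<in> (arcs Ps)\<^sup>+" using less.IH[of m] less.prems m by auto
    then show ?thesis using arc by auto
  qed
qed

text \<open>Since the paths are disjoint, a run along red arcs stays on a single red path.\<close>
lemma routes_arcs_tranclE:
  assumes r: "routes V E S T k Ps" and uw: "(u, w) \<in> (arcs Ps)\<^sup>+"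
  obtains p l l' where "p \<in> Ps" "l < l'" "l' < length p" "p ! l = u" "p ! l' = w"
proof -
  have "\<exists>p\<in>Ps. \<exists>l l'. l < l' \<and> l' < length p \<and> p ! l = u \<and> p ! l' = w"
    using uw
  proof (induction rule: trancl_induct)
    case (base y)
    then obtain p i where "p \<in> Ps" "Suc i < length p" "p ! i = u" "p ! Suc i = y"
      by (rule arcsE)
    then show ?case by (intro bexI[of _ p] exI[of _ i] exI[of _ "Suc i"]) auto
  next
    case (step y z)
    obtain p l l' where p: "p \<in> Ps" "l < l'" "l' < length p" "p ! l = u" "p ! l' = y"
      using step.IH by blast
    obtain p' i where p': "p' \<in> Ps" "Suc i < length p'" "p' ! i = y" "p' ! Suc i = z"
      using step.hyps(2) by (rule arcsE)
    have "y \<in> set p" using p(3,5) by (metis nth_mem)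
    moreover have "y \<in> set p'" using p'(2,3) by (metis Suc_lessD nth_mem)
    ultimately have "p' = p" using routes_disjoint[OF r p'(1) p(1)] by blast
    moreover have "distinct p" using routes_paths(1)[OF r p(1)] unfolding is_path_def by blast
    ultimately have "i = l'"
      using p(3,5) p'(3) Suc_lessD[OF p'(2)] nth_eq_iff_index_eq[of p i l'] by simp
    then show ?case using p p' \<open>p' = p\<close> by (intro bexI[of _ p] exI[of _ l] exI[of _ "Suc l'"]) auto
  qed
  then show thesis using that by blast
qed

lemma routes_arcs_irrefl:
  assumes r: "routes V E S T k Ps" shows "(w, w) \<notin> (arcs Ps)\<^sup>+"
proof
  assume "(w, w) \<in> (arcs Ps)\<^sup>+"
  with r obtain p l l' where p: "p \<in> Ps" "l < l'" "l' < length p" "p ! l = w" "p ! l' = w"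
    by (rule routes_arcs_tranclE)
  have "distinct p" using routes_paths(1)[OF r p(1)] unfolding is_path_def by blast
  then show False using p nth_eq_iff_index_eq[of p l l'] by simp
qed

text \<open>A closed walk \<open>f 0, \<dots>, f n = f 0\<close> of the relation \<open>(arcs R)\<^sup>+ O A\<close>, together with
  witnesses: step \<open>i\<close> runs along the red path \<open>P i\<close> from position \<open>a i\<close> to \<open>b i\<close> and then takes
  an arc of \<open>A\<close>.\<close>
locale red_blue_cycle =
  fixes R :: "'a list set" and A :: "('a \<times> 'a) set" and n :: nat and f :: "nat \<Rightarrow> 'a"
    and P :: "nat \<Rightarrow> 'a list" and a b :: "nat \<Rightarrow> nat"
  assumes len_pos: "0 < n" and closed: "f n = f 0"
    and red: "\<And>i. i < n \<Longrightarrow> P i \<in> R"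
    and run: "\<And>i. i < n \<Longrightarrow> a i < b i \<and> b i < length (P i)"
    and start: "\<And>i. i < n \<Longrightarrow> P i ! a i = f i"
    and blue: "\<And>i. i < n \<Longrightarrow> (P i ! b i, f (Suc i)) \<in> A"
begin

lemma step:
  assumes i: "i < n" shows "(f i, f (Suc i)) \<in> (arcs R)\<^sup>+ O A"
proof
  show "(f i, P i ! b i) \<in> (arcs R)\<^sup>+"
    using arcs_trancl_path[OF red[OF i], of "a i" "b i"] run[OF i] start[OF i] by simp
qed (rule blue[OF i])

lemma steps: "i \<le> j \<Longrightarrow> j \<le> n \<Longrightarrow> (f i, f j) \<in> ((arcs R)\<^sup>+ O A) ^^ (j - i)"
  unfolding relpow_fun_conv
proof (intro exI[of _ "\<lambda>t. f (i + t)"] conjI allI impI)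
  assume "i \<le> j" "j \<le> n"
  then show "f (i + (j - i)) = f j" by simp
  fix t assume "t < j - i"
  then show "(f (i + t), f (i + Suc t)) \<in> (arcs R)\<^sup>+ O A"
    using step[of "i + t"] \<open>j \<le> n\<close> by simp
qed simp

text \<open>Two steps on the same red path \<open>P i = P j\<close> can be merged into a single red run,
  which cuts the cycle short.\<close>
lemma shortcut:
  assumes ij: "i < j" "j < n" and same: "P i = P j"
  shows "\<exists>w m. 0 < m \<and> m < n \<and> (w, w) \<in> ((arcs R)\<^sup>+ O A) ^^ m"
proof -
  let ?X = "(arcs R)\<^sup>+ O A"
  have i: "i < n" using ij by simp
  show ?thesis
  proof (cases "a i < b j")
    case True
    have "(f i, P j ! b j) \<in> (arcs R)\<^sup>+"
      using arcs_trancl_path[OF red[OF i] True] run[OF ij(2)] start[OF i] same by simp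
    then have "(f i, f (Suc j)) \<in> ?X" using blue[OF ij(2)] by blast
    moreover have "(f (Suc j), f n) \<in> ?X ^^ (n - Suc j)" using steps[of "Suc j" n] ij by simp
    ultimately have "(f i, f 0) \<in> ?X ^^ Suc (n - Suc j)" unfolding closed by (rule relpow_Suc_I2)
    moreover have "(f 0, f i) \<in> ?X ^^ i" using steps[of 0 i] ij by simp
    ultimately have "(f i, f i) \<in> ?X ^^ (Suc (n - Suc j) + i)" unfolding relpow_add by blast
    moreover have "0 < Suc (n - Suc j) + i" "Suc (n - Suc j) + i < n" using ij by auto
    ultimately show ?thesis by blast
  next
    case False
    then have "a j < b i" using run[OF i] run[OF ij(2)] by linarith
    then have "(f j, P i ! b i) \<in> (arcs R)\<^sup>+"
      using arcs_trancl_path[OF red[OF ij(2)], of "a j" "b i"] run[OF i] start[OF ij(2)] same by simp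
    then have "(f j, f (Suc i)) \<in> ?X" using blue[OF i] by blast
    moreover have "(f (Suc i), f j) \<in> ?X ^^ (j - Suc i)" using steps[of "Suc i" j] ij by simp
    ultimately have "(f j, f j) \<in> ?X ^^ Suc (j - Suc i)" by (rule relpow_Suc_I2)
    moreover have "0 < Suc (j - Suc i)" "Suc (j - Suc i) < n" using ij by auto
    ultimately show ?thesis by blast
  qed
qed

end

text \<open>If the red paths of a cycle are pairwise different, splicing each red path
  \<open>P (i + 1)\<close> up to \<open>f (i + 1)\<close> onto the tail of \<open>P i\<close> from \<open>b i\<close>, through the arc of \<open>A\<close> between
  them, reroutes \<open>R\<close> without the red edge leaving \<open>f 0\<close>.\<close>
locale red_blue_rerouting = red_blue_cycle R A n f P a b
  for R :: "'a list set" and A n f P a b +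
  fixes V :: "'a set" and E :: "'a set set" and S T :: "'a set" and k :: nat
  assumes routes: "routes V E S T k R" and inj: "inj_on P {..<n}"
    and A_edges: "arc_edges A \<subseteq> E" and red_not_A: "arc_edges (arcs R) \<inter> arc_edges A = {}"
begin

definition splice :: "nat \<Rightarrow> 'a list" where
  "splice i = take (Suc (a (Suc i mod n))) (P (Suc i mod n)) @ drop (b i) (P i)"

definition cut_edge :: "'a set" where
  "cut_edge = {P 0 ! a 0, P 0 ! Suc (a 0)}"

lemma red_paths_disjoint:
  assumes "i < n" "j < n" "i \<noteq> j" shows "set (P i) \<inter> set (P j) = {}"
proof -
  have "P i \<noteq> P j" using inj_on_eq_iff[OF inj] assms by simp
  then show ?thesis using routes_disjoint[OF routes red[OF assms(1)] red[OF assms(2)]] by blast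
qed

lemma red_path: "i < n \<Longrightarrow> is_path V E (P i)"
  using routes_paths(1)[OF routes red] .

lemma head_tail_disjoint:
  assumes "i < n" "j < n" shows "set (take (Suc (a i)) (P i)) \<inter> set (drop (b j) (P j)) = {}"
proof (cases "i = j")
  case True
  have "distinct (P i)" using red_path[OF assms(1)] unfolding is_path_def by blast
  moreover have "Suc (a i) \<le> b i" using run[OF assms(1)] by simp
  ultimately show ?thesis using set_take_disj_set_drop_if_distinct True by simp
next
  case False
  then show ?thesis
    using red_paths_disjoint[OF assms False] set_take_subset[of _ "P i"] set_drop_subset[of _ "P j"]
    by blast
qed

lemma start_Suc: "i < n \<Longrightarrow> P (Suc i mod n) ! a (Suc i mod n) = f (Suc i)"
proof (cases "Suc i = n")
  case True
  then show ?thesis using start[OF len_pos] closed by simp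
next
  case False
  assume "i < n"
  then show ?thesis using start[of "Suc i"] False by simp
qed

lemma cut_edge_red: "cut_edge \<in> arc_edges (arcs R)"
  unfolding cut_edge_def arc_edges_def
  by (rule image_eqI[of _ _ "(P 0 ! a 0, P 0 ! Suc (a 0))"])
    (use arcsI[OF red[OF len_pos], of "a 0"] run[OF len_pos] in auto)

lemma cut_edge_not_in_head:
  assumes "i < n" shows "\<not> cut_edge \<subseteq> set (take (Suc (a i)) (P i))"
proof (cases "i = 0")
  case True
  have "distinct (P 0)" using red_path[OF len_pos] unfolding is_path_def by blast
  moreover have "P 0 ! Suc (a 0) \<in> set (drop (Suc (a 0)) (P 0))"
    using run[OF len_pos] by (intro nth_in_set_drop) auto
  ultimately have "P 0 ! Suc (a 0) \<notin> set (take (Suc (a 0)) (P 0))"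
    using set_take_disj_set_drop_if_distinct[of "P 0" "Suc (a 0)" "Suc (a 0)"] by blast
  then show ?thesis using True unfolding cut_edge_def by blast
next
  case False
  have "P 0 ! a 0 \<in> set (P 0)" using run[OF len_pos] by simp
  then show ?thesis using red_paths_disjoint[OF assms len_pos False] set_take_subset[of _ "P i"]
    unfolding cut_edge_def by blast
qed

lemma cut_edge_not_in_tail:
  assumes "i < n" shows "\<not> cut_edge \<subseteq> set (drop (b i) (P i))"
proof (cases "i = 0")
  case True
  have "P 0 ! a 0 \<in> set (take (Suc (a 0)) (P 0))"
    using run[OF len_pos] by (intro nth_in_set_take) auto
  then have "P 0 ! a 0 \<notin> set (drop (b 0) (P 0))" using head_tail_disjoint[OF len_pos len_pos] by blast
  then show ?thesis using True unfolding cut_edge_def by blast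
next
  case False
  have "P 0 ! a 0 \<in> set (P 0)" using run[OF len_pos] by simp
  then show ?thesis using red_paths_disjoint[OF assms len_pos False] set_drop_subset[of _ "P i"]
    unfolding cut_edge_def by blast
qed

lemma Suc_mod_less: "i < n \<Longrightarrow> Suc i mod n < n"
  using len_pos by simp

lemma Suc_mod_inj: "i < n \<Longrightarrow> j < n \<Longrightarrow> Suc i mod n = Suc j mod n \<Longrightarrow> i = j"
  by (cases "Suc i = n"; cases "Suc j = n") auto

lemma junction_edge: "i < n \<Longrightarrow> {f (Suc i), P i ! b i} \<in> E - {cut_edge}"
proof -
  assume i: "i < n"
  have "{P i ! b i, f (Suc i)} \<in> arc_edges A" using blue[OF i] unfolding arc_edges_def by force
  then show ?thesis using A_edges red_not_A cut_edge_red by (auto simp: insert_commute)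
qed

lemma splice_path:
  assumes i: "i < n"
  shows "is_path V (E - {cut_edge}) (splice i)" "hd (splice i) \<in> S" "last (splice i) \<in> T"
proof -
  define j where "j = Suc i mod n"
  have j: "j < n" unfolding j_def using Suc_mod_less[OF i] .
  let ?head = "take (Suc (a j)) (P j)" and ?tail = "drop (b i) (P i)"
  have head: "is_path V (E - {cut_edge}) ?head"
    using is_path_take[OF red_path[OF j]] cut_edge_not_in_head[OF j]
    by (intro is_path_Diff_edge_not_subset) auto
  have tail: "is_path V (E - {cut_edge}) ?tail"
    using is_path_drop[OF red_path[OF i]] run[OF i] cut_edge_not_in_tail[OF i]
    by (intro is_path_Diff_edge_not_subset) auto
  have "last ?head = f (Suc i)" "hd ?tail = P i ! b i"
    using run[OF j] run[OF i] start_Suc[OF i] unfolding j_def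
    by (simp_all add: take_Suc_conv_app_nth hd_drop_conv_nth)
  then have "is_path (V \<union> V) (E - {cut_edge}) (?head @ ?tail)"
    using is_path_append[OF head tail head_tail_disjoint[OF j i]] junction_edge[OF i] by simp
  then show "is_path V (E - {cut_edge}) (splice i)" unfolding splice_def j_def by simp
  have "P j \<noteq> []" using red_path[OF j] unfolding is_path_def by blast
  then show "hd (splice i) \<in> S"
    using routes_paths(2)[OF routes red[OF j]] unfolding splice_def j_def[symmetric] by simp
  show "last (splice i) \<in> T"
    using routes_paths(3)[OF routes red[OF i]] run[OF i] unfolding splice_def by (simp add: last_drop)
qed

lemma set_splice:
  "set (splice i) = set (take (Suc (a (Suc i mod n))) (P (Suc i mod n))) \<union> set (drop (b i) (P i))"
  unfolding splice_def by simp

lemma splices_disjoint: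
  assumes ij: "i < n" "j < n" "i \<noteq> j" shows "set (splice i) \<inter> set (splice j) = {}"
proof -
  have "Suc i mod n \<noteq> Suc j mod n" using Suc_mod_inj[OF ij(1,2)] ij(3) by blast
  then have heads: "set (take (Suc (a (Suc i mod n))) (P (Suc i mod n)))
      \<inter> set (take (Suc (a (Suc j mod n))) (P (Suc j mod n))) = {}"
    using red_paths_disjoint[OF Suc_mod_less[OF ij(1)] Suc_mod_less[OF ij(2)]]
      set_take_subset[of _ "P (Suc i mod n)"] set_take_subset[of _ "P (Suc j mod n)"]
    by blast
  have tails: "set (drop (b i) (P i)) \<inter> set (drop (b j) (P j)) = {}"
    using red_paths_disjoint[OF ij] set_drop_subset[of _ "P i"] set_drop_subset[of _ "P j"] by blast
  show ?thesis
    unfolding set_splice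
    using heads tails head_tail_disjoint[OF Suc_mod_less[OF ij(1)] ij(2)]
      head_tail_disjoint[OF Suc_mod_less[OF ij(2)] ij(1)]
    by blast
qed

lemma other_paths:
  assumes q: "q \<in> R - P ` {..<n}"
  shows "is_path V (E - {cut_edge}) q" "i < n \<Longrightarrow> set (splice i) \<inter> set q = {}"
proof -
  have disj: "set (P j) \<inter> set q = {}" if "j < n" for j
    using routes_disjoint[OF routes red[OF that]] q that by blast
  have "P 0 ! a 0 \<in> set (P 0)" using run[OF len_pos] by simp
  then have "\<not> cut_edge \<subseteq> set q" using disj[OF len_pos] unfolding cut_edge_def by blast
  then show "is_path V (E - {cut_edge}) q"
    using routes_paths(1)[OF routes] q by (intro is_path_Diff_edge_not_subset) auto
  show "set (splice i) \<inter> set q = {}" if "i < n"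
    unfolding set_splice
    using disj[OF that] disj[OF Suc_mod_less[OF that]]
      set_take_subset[of _ "P (Suc i mod n)"] set_drop_subset[of _ "P i"]
    by blast
qed

lemma routes_without_cut_edge: "routable V (E - {cut_edge}) S T k"
proof -
  have "routes V (E - {cut_edge}) S T k (splice ` {..<n} \<union> (R - P ` {..<n}))"
    using routes inj
  proof (rule routes_replace)
    show "P ` {..<n} \<subseteq> R" using red by blast
  qed (use splice_path splices_disjoint other_paths in auto)
  then show ?thesis unfolding routable_def by blast
qed

end

lemma red_blue_cycle_exists:
  assumes routes: "routes V E S T k R" and cyc: "(w, w) \<in> ((arcs R)\<^sup>+ O A) ^^ n" and n: "0 < n"
  obtains f P a b where "red_blue_cycle R A n f P a b"
proof -
  obtain f where f: "f 0 = w" "f n = w" "\<And>i. i < n \<Longrightarrow> (f i, f (Suc i)) \<in> (arcs R)\<^sup>+ O A"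
    using cyc unfolding relpow_fun_conv by blast
  have "\<exists>p l l'. i < n \<longrightarrow> p \<in> R \<and> l < l' \<and> l' < length p \<and> p ! l = f i \<and> (p ! l', f (Suc i)) \<in> A"
    for i
  proof (cases "i < n")
    case True
    then obtain z where z: "(f i, z) \<in> (arcs R)\<^sup>+" "(z, f (Suc i)) \<in> A" using f(3) by blast
    obtain p l l' where "p \<in> R" "l < l'" "l' < length p" "p ! l = f i" "p ! l' = z"
      using routes z(1) by (rule routes_arcs_tranclE)
    then show ?thesis using z(2) by blast
  qed simp
  then obtain P a b where "\<And>i. i < n \<Longrightarrow> P i \<in> R \<and> a i < b i \<and> b i < length (P i) \<and>
      P i ! a i = f i \<and> (P i ! b i, f (Suc i)) \<in> A"
    by metis
  then have "red_blue_cycle R A n f P a b" using n f(1,2) by unfold_locales auto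
  then show thesis by (rule that)
qed

text \<open>A shortest cycle uses each red path at most once (otherwise it could be shortcut), and
  then rerouting along the arcs of \<open>A\<close> frees a red edge, which must therefore carry an arc
  of \<open>A\<close>.\<close>
lemma red_blue_acyclic:
  assumes routes: "routes V E S T k R" and A_edges: "arc_edges A \<subseteq> E"
    and red_not_A: "arc_edges (arcs R) \<inter> arc_edges A = {}"
    and deletable: "\<And>e. e \<in> E \<Longrightarrow> routable V (E - {e}) S T k \<Longrightarrow> e \<in> arc_edges A"
  shows "(w, w) \<notin> ((arcs R)\<^sup>+ O A)\<^sup>+"
proof -
  let ?X = "(arcs R)\<^sup>+ O A"
  have "(w, w) \<notin> ?X ^^ n" if "0 < n" for n w
    using that
  proof (induction n arbitrary: w rule: less_induct)
    case (less n)
    show ?case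
    proof
      assume "(w, w) \<in> ?X ^^ n"
      with routes obtain f P a b where "red_blue_cycle R A n f P a b"
        using less.prems by (rule red_blue_cycle_exists)
      then interpret red_blue_cycle R A n f P a b .
      show False
      proof (cases "inj_on P {..<n}")
        case True
        then interpret red_blue_rerouting R A n f P a b V E S T k
          using routes A_edges red_not_A by unfold_locales
        have "cut_edge \<in> E" using cut_edge_red routes_arc_edges[OF routes] by blast
        then have "cut_edge \<in> arc_edges A" using deletable routes_without_cut_edge by blast
        then show False using cut_edge_red red_not_A by blast
      next
        case False
        then obtain i j where ij: "i < j" "j < n" "P i = P j"
          unfolding inj_on_def by (metis lessThan_iff linorder_neqE_nat)
        show False using shortcut[OF ij] less.IH by blast
      qed
    qed
  qed
  then show ?thesis unfolding trancl_power by blast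
qed

section \<open>Chains\<close>

text \<open>Invariant for walking along a chain after a run of \<open>A1\<close>: the walk so far lies in
  \<open>(A1\<^sup>+ O A2)\<^sup>* O A1\<^sup>+\<close> after an edge of colour \<open>col\<close> and in \<open>(A1\<^sup>+ O A2)\<^sup>+\<close> after the other
  colour; alternation guarantees that every \<open>A2\<close> step is preceded by an \<open>A1\<close> step.\<close>
lemma chain_reach:
  fixes Z :: "(bool \<times> 'a \<times> 'a) list"
  assumes arcs_ok: "\<And>t. t < length Z \<Longrightarrow> snd (Z ! t) \<in> (if fst (Z ! t) = col then A1 else A2)"
    and alt: "\<And>t. Suc t < length Z \<Longrightarrow>
                snd (snd (Z ! t)) = fst (snd (Z ! Suc t)) \<and> fst (Z ! Suc t) \<noteq> fst (Z ! t)"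
    and start: "(u, fst (snd (Z ! i))) \<in> A1\<^sup>+" and len: "i + d < length Z"
  shows "(u, snd (snd (Z ! (i + d))))
           \<in> (if fst (Z ! (i + d)) = col then (A1\<^sup>+ O A2)\<^sup>* O A1\<^sup>+ else (A1\<^sup>+ O A2)\<^sup>+)"
  using len
proof (induction d)
  case 0
  obtain c x y where Zi: "Z ! i = (c, x, y)" by (cases "Z ! i") auto
  have "(x, y) \<in> (if c = col then A1 else A2)" using arcs_ok[of i] 0 Zi by simp
  moreover have "(u, x) \<in> A1\<^sup>+" using start Zi by simp
  ultimately show ?case using Zi by (cases "c = col") auto
next
  case (Suc d)
  let ?t = "i + d"
  obtain c x y where Zt: "Z ! Suc ?t = (c, x, y)" by (cases "Z ! Suc ?t") auto
  have IH: "(u, x) \<in> (if fst (Z ! ?t) = col then (A1\<^sup>+ O A2)\<^sup>* O A1\<^sup>+ else (A1\<^sup>+ O A2)\<^sup>+)"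
    using Suc alt[of ?t] Zt by simp
  have arc: "(x, y) \<in> (if c = col then A1 else A2)" using arcs_ok[of "Suc ?t"] Suc.prems Zt by simp
  have flip: "(c = col) \<longleftrightarrow> \<not> (fst (Z ! ?t) = col)" using alt[of ?t] Suc.prems Zt by auto
  show ?case
  proof (cases "c = col")
    case True
    then have "(u, x) \<in> (A1\<^sup>+ O A2)\<^sup>+" "(x, y) \<in> A1" using IH arc flip by auto
    then have "(u, y) \<in> (A1\<^sup>+ O A2)\<^sup>* O A1\<^sup>+" by auto
    then show ?thesis using True Zt by simp
  next
    case False
    then obtain z where "(u, z) \<in> (A1\<^sup>+ O A2)\<^sup>*" "(z, x) \<in> A1\<^sup>+" "(x, y) \<in> A2"
      using IH arc flip by auto
    then have "(u, y) \<in> (A1\<^sup>+ O A2)\<^sup>+" by (meson relcompI rtrancl_into_trancl1)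
    then show ?thesis using False Zt by simp
  qed
qed

lemma cycle_of_rtrancl_relcomp:
  assumes "(x, x) \<in> (A1\<^sup>+ O A2)\<^sup>* O A1\<^sup>+"
  shows "(\<exists>w. (w, w) \<in> (A1\<^sup>+ O A2)\<^sup>+) \<or> (\<exists>w. (w, w) \<in> A1\<^sup>+)"
proof -
  let ?X = "A1\<^sup>+ O A2"
  obtain y where y: "(x, y) \<in> ?X\<^sup>*" "(y, x) \<in> A1\<^sup>+" using assms by blast
  show ?thesis
  proof (cases "x = y")
    case True
    then show ?thesis using y(2) by blast
  next
    case False
    then obtain z u where "(x, u) \<in> A1\<^sup>+" "(u, z) \<in> A2" "(z, y) \<in> ?X\<^sup>*"
      using y(1) by (metis converse_rtranclE relcompE prod.inject)
    moreover have "(y, u) \<in> A1\<^sup>+" using y(2) \<open>(x, u) \<in> A1\<^sup>+\<close> by simp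
    ultimately have "(y, z) \<in> ?X" "(z, y) \<in> ?X\<^sup>*" by blast+
    then show ?thesis by (meson rtrancl_into_trancl2)
  qed
qed

lemma walk_verts_length: "length (walk_verts Z) = Suc (length Z)"
  unfolding walk_verts_def by simp

lemma walk_verts_nth_source:
  assumes "is_chain R B Z" "i < length Z"
  shows "walk_verts Z ! i = fst (snd (Z ! i))"
proof (cases i)
  case 0
  then show ?thesis using assms unfolding walk_verts_def is_chain_def by (simp add: hd_conv_nth)
next
  case (Suc m)
  then show ?thesis using assms unfolding walk_verts_def is_chain_def by simp
qed

lemma walk_verts_nth_target:
  assumes "0 < j" "j \<le> length Z" shows "walk_verts Z ! j = snd (snd (Z ! (j - 1)))"
proof -
  obtain m where "j = Suc m" using assms(1) by (cases j) auto
  then show ?thesis using assms(2) unfolding walk_verts_def by simp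
qed

lemma chain_no_back_run:
  fixes Z :: "(bool \<times> 'a \<times> 'a) list"
  assumes acyclic: "\<And>w. (w, w) \<notin> (A1\<^sup>+ O A2)\<^sup>+" and irrefl: "\<And>w. (w, w) \<notin> A1\<^sup>+"
    and chain: "is_chain R B Z"
    and arcs_ok: "\<And>t. t < length Z \<Longrightarrow> snd (Z ! t) \<in> (if fst (Z ! t) = col then A1 else A2)"
    and ij: "i < j" "j < length (walk_verts Z)" "walk_verts Z ! i = v" "walk_verts Z ! j = v'"
    and back_run: "(v', v) \<in> A1\<^sup>+"
  shows False
proof -
  define d where "d = j - 1 - i"
  have len: "i + d < length Z" "j - 1 = i + d" using ij(1,2) unfolding d_def walk_verts_length by auto
  have "(v', fst (snd (Z ! i))) \<in> A1\<^sup>+"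
    using walk_verts_nth_source[OF chain] ij(1,3) len back_run by simp
  moreover have "\<And>t. Suc t < length Z \<Longrightarrow>
      snd (snd (Z ! t)) = fst (snd (Z ! Suc t)) \<and> fst (Z ! Suc t) \<noteq> fst (Z ! t)"
    using chain unfolding is_chain_def by blast
  ultimately have "(v', snd (snd (Z ! (i + d))))
      \<in> (if fst (Z ! (i + d)) = col then (A1\<^sup>+ O A2)\<^sup>* O A1\<^sup>+ else (A1\<^sup>+ O A2)\<^sup>+)"
    using chain_reach[OF arcs_ok _ _ len(1)] by blast
  moreover have "snd (snd (Z ! (i + d))) = v'"
    using walk_verts_nth_target[of j Z] ij len unfolding walk_verts_length by simp
  ultimately have "(v', v') \<in> (A1\<^sup>+ O A2)\<^sup>* O A1\<^sup>+ \<or> (v', v') \<in> (A1\<^sup>+ O A2)\<^sup>+"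
    by (cases "fst (Z ! (i + d)) = col") simp_all
  then show False
  proof
    assume "(v', v') \<in> (A1\<^sup>+ O A2)\<^sup>* O A1\<^sup>+"
    then show False using cycle_of_rtrancl_relcomp[of v' A1 A2] acyclic irrefl by blast
  qed (use acyclic in blast)
qed

lemma chain_arc:
  assumes "is_chain R B Z" "t < length Z"
  shows "snd (Z ! t) \<in> (if fst (Z ! t) then arcs R else arcs B)"
proof -
  obtain c x y where Zt: "Z ! t = (c, x, y)" by (cases "Z ! t") auto
  have "(c, x, y) \<in> tildeH R B" using assms nth_mem Zt unfolding is_chain_def by (metis subsetD)
  then have "(x, y) \<in> (if c then arcs R else arcs B)" unfolding tildeH_def by (cases c) simp_all
  then show ?thesis using Zt by simp
qed

lemma path_order_or_back_run:
  assumes P: "P \<in> Ps" and v: "v \<in> set P" "v' \<in> set P" "v \<noteq> v'"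
  shows "(\<exists>i j. i < j \<and> j < length P \<and> P ! i = v \<and> P ! j = v') \<or> (v', v) \<in> (arcs Ps)\<^sup>+"
proof -
  obtain i j where ij: "i < length P" "P ! i = v" "j < length P" "P ! j = v'"
    using v(1,2) by (auto simp: in_set_conv_nth)
  then have "i \<noteq> j" using v(3) by blast
  then consider "i < j" | "j < i" by linarith
  then show ?thesis
  proof cases
    case 1
    then show ?thesis using ij by blast
  next
    case 2
    then show ?thesis using arcs_trancl_path[OF P 2 ij(1)] ij by simp
  qed
qed

theorem claim2p6:
  fixes VG :: "'a set" and EG :: "'a set set" and S1 T1 S2 T2 :: "'a set" and k :: nat
    and VH :: "'a set" and EH :: "'a set set" and \<phi> :: "'a \<Rightarrow> 'a set"
    and R B :: "'a list set" and Z :: "(bool \<times> 'a \<times> 'a) list"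
    and P :: "'a list" and v v' :: 'a
  assumes G: "sgraph VG EG"
    and term_sub: "S1 \<union> T1 \<union> S2 \<union> T2 \<subseteq> VG"
    and disj: "S1 \<inter> T1 = {}" "S1 \<inter> S2 = {}" "S1 \<inter> T2 = {}"
              "T1 \<inter> S2 = {}" "T1 \<inter> T2 = {}" "S2 \<inter> T2 = {}"
    and card: "card S1 = k" "card T1 = k" "card S2 = k" "card T2 = k"
    and deg1: "\<forall>t \<in> S1 \<union> T1 \<union> S2 \<union> T2. degree EG t = 1"
    and routG: "routable VG EG S1 T1 k" "routable VG EG S2 T2 k"
    and H: "minimal_terminal_minor VG EG S1 T1 S2 T2 k VH EH \<phi>"
    and R: "routes VH EH S1 T1 k R"
    and B: "routes VH EH S2 T2 k B"
    and Z: "is_chain R B Z"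
    and P: "P \<in> R \<union> B"
    and vP: "v \<in> set P" "v' \<in> set P"
    and vv': "v \<noteq> v'"
    and before_Z: "\<exists>i j. i < j \<and> j < length (walk_verts Z) \<and>
                       walk_verts Z ! i = v \<and> walk_verts Z ! j = v'"
  shows "\<exists>i j. i < j \<and> j < length P \<and> P ! i = v \<and> P ! j = v'"
proof (rule ccontr)
  assume not_before: "\<not> ?thesis"
  obtain i j where ij: "i < j" "j < length (walk_verts Z)" "walk_verts Z ! i = v" "walk_verts Z ! j = v'"
    using before_Z by blast
  have no_common: "arc_edges (arcs R) \<inter> arc_edges (arcs B) = {}"
    using minimal_terminal_minor_arc_edges_disjoint[OF G disj(2-5) deg1 H R B] .
  note deletable = minimal_terminal_minor_deletable_edge[OF H R B]
  show False
  proof (cases "P \<in> R")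
    case True
    have "(w, w) \<notin> ((arcs R)\<^sup>+ O arcs B)\<^sup>+" for w
      using red_blue_acyclic[OF R routes_arc_edges[OF B] no_common] deletable(1) by blast
    moreover have "(v', v) \<in> (arcs R)\<^sup>+"
      using path_order_or_back_run[OF True vP vv'] not_before by blast
    moreover have "snd (Z ! t) \<in> (if fst (Z ! t) = True then arcs R else arcs B)" if "t < length Z" for t
      using chain_arc[OF Z that] by simp
    ultimately show False using chain_no_back_run[OF _ routes_arcs_irrefl[OF R] Z _ ij] by blast
  next
    case False
    then have "P \<in> B" using P by blast
    have "(w, w) \<notin> ((arcs B)\<^sup>+ O arcs R)\<^sup>+" for w
      using red_blue_acyclic[OF B routes_arc_edges[OF R]] no_common deletable(2)
      by (auto simp: Int_commute)
    moreover have "(v', v) \<in> (arcs B)\<^sup>+"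
      using path_order_or_back_run[OF \<open>P \<in> B\<close> vP vv'] not_before by blast
    moreover have "snd (Z ! t) \<in> (if fst (Z ! t) = False then arcs B else arcs R)" if "t < length Z" for t
      using chain_arc[OF Z that] by (cases "fst (Z ! t)") simp_all
    ultimately show False using chain_no_back_run[OF _ routes_arcs_irrefl[OF B] Z _ ij] by blast
  qed
qed

end
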